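(* Let $G = (V, E, b, c)$ be a weighted hypergraph with $n$ vertices in which every vertex belongs to some edge, and let $\mathtt{OPT}$ be a minimum-cost edge cover of $G$. For any $0 \leq \epsilon < 1$, algorithm SSSC outputs a $(1-\epsilon)$-cover certificate for $G$ whose image has cost $O\left( \min\{ 1/\epsilon, \sqrt{n} \} \cdot c(\mathtt{OPT}) \right)$.
   Context: A weighted hypergraph $G = (V, E, b, c)$ has vertex set $V$ ($|V| = n$), a multiset $E$ of non-empty edges $e \subseteq V$, benefits $b : V \to \mathbb{Q}_{>0}$ and costs $c : E \to \mathbb{Q}_{>0}$; $b(U) = \sum_{v \in U} b(v)$, $c(F) = \sum_{e \in F} c(e)$. An edge cover is a set $F \subseteq E$ whose union is $V$. A $\delta$-cover certificate for $G$ is a partial function $\chi$ from $V$ to edge identifiers such that (1) if $v \in \mathrm{Dom}(\chi)$ and $\chi(v) = \mathrm{id}(e)$ then $v \in e$, and (2) $b(\mathrm{Dom}(\chi)) \geq \delta \cdot b(V)$; $\mathrm{Im}(\chi)$ is the set of edges whose identifiers are values of $\chi$. Convention: $\min\{1/x, y\} = y$ when $x = 0$. Edges arrive in a stream $e_0, e_1, \dots$ with unique identifiers $\mathrm{id}(e)$. Procedure COVER (on a weighted hypergraph with benefit function $\beta$) maintains for each $v$ a variable $\mathrm{eid}(v)$ (initially NULL) and an integer $\mathrm{eff}(v)$ (initially $-\infty$); $\mathrm{eff}_t(v)$ is its value just before $e_t$ is processed. For $T \subseteq e_t$, $\mathrm{lev}_t(T) = \lceil \lg(\beta(T)/c(e_t))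 \rceil$ ($\lg$ = base-2 logarithm), and $T$ is effective at time $t$ if $\mathrm{lev}_t(T) > \mathrm{eff}_t(v)$ for all $v \in T$. When $e_t$ arrives, COVER picks an effective $T \subseteq e_t$ of largest $\beta(T)$ and for every $v \in T$ sets $\mathrm{eid}(v) \leftarrow \mathrm{id}(e_t)$, $\mathrm{eff}(v) \leftarrow \mathrm{lev}_t(T)$. Algorithm SSSC runs in parallel over the stream: (P1) COVER with benefits $b$, with final values $\mathrm{eid}_\infty(\cdot), \mathrm{eff}_\infty(\cdot)$; (P2) COVER with all benefits equal to $1$, with final values $\mathrm{eid}^{\mathbf{1}}_\infty(\cdot), \mathrm{eff}^{\mathbf{1}}_\infty(\cdot)$; (P3) for each $v$, $\mathrm{emin}(v)$ = identifier of a minimum-cost edge containing $v$ seen so far; (P4) stores $b(v)$ for each $v$. At the end, given $\epsilon$: if $\epsilon \geq 1/\sqrt{n}$, let $r^*$ be the largest integer with $b(I(\leq r^* )) \leq \epsilon b(V)$ where $I(\leq r) = \{ v : \mathrm{eff}_\infty(v) \leq r \}$, and output the partial function mapping each $v \in V \setminus I(\leq r^* )$ to $\mathrm{eid}_\infty(v)$. If $\epsilon < 1/\sqrt{n}$, let $r^*$ be the largest integer with $|I^{\mathbf{1}}(\leq r^* )| \leq \sqrt{n}$ where $I^{\mathbf{1}}(\leq r) = \{ v : \mathrm{eff}^{\mathbf{1}}_\infty(v) \leq r \}$, and output the total function mapping each $v \in V \setminus I^{\mathbf{1}}(\leq r^* )$ to $\mathrm{eid}^{\mathbf{1}}_\infty(v)$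 and each $v \in I^{\mathbf{1}}(\leq r^* )$ to $\mathrm{emin}(v)$. *)

theory Defs
  imports Complex_Main
begin

type_synonym edge = "nat \<times> nat set \<times> real"
type_synonym stream = "edge list"

definition eid_of :: "edge \<Rightarrow> nat" where "eid_of e = fst e"
definition verts_of :: "edge \<Rightarrow> nat set" where "verts_of e = fst (snd e)"
definition cost_of :: "edge \<Rightarrow> real" where "cost_of e = snd (snd e)"

text \<open>Weighted hypergraph (V, E, b, c) given by the vertex set, the benefits and the stream.\<close>
definition weighted_hypergraph :: "nat set \<Rightarrow> (nat \<Rightarrow> real) \<Rightarrow> stream \<Rightarrow> bool" where
  "weighted_hypergraph V b es \<longleftrightarrow>
     finite V \<and>
     (\<forall>v\<in>V. b v \<in> \<rat> \<and> b v > 0) \<and>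
     (\<forall>e\<in>set es. verts_of e \<noteq> {} \<and> verts_of e \<subseteq> V \<and> cost_of e \<in> \<rat> \<and> cost_of e > 0) \<and>
     distinct (map eid_of es)"

definition every_vertex_covered :: "nat set \<Rightarrow> stream \<Rightarrow> bool" where
  "every_vertex_covered V es \<longleftrightarrow> (\<forall>v\<in>V. \<exists>e\<in>set es. v \<in> verts_of e)"

text \<open>Edge covers: sets of positions in the stream (E is a multiset).\<close>
definition edge_cover :: "nat set \<Rightarrow> stream \<Rightarrow> nat set \<Rightarrow> bool" where
  "edge_cover V es F \<longleftrightarrow> F \<subseteq> {..<length es} \<and> (\<Union>t\<in>F. verts_of (es ! t)) = V"

definition cover_cost :: "stream \<Rightarrow> nat set \<Rightarrow> real" where
  "cover_cost es F = (\<Sum>t\<in>F. cost_of (es ! t))"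

definition min_edge_cover :: "nat set \<Rightarrow> stream \<Rightarrow> nat set \<Rightarrow> bool" where
  "min_edge_cover V es F \<longleftrightarrow> edge_cover V es F \<and>
     (\<forall>F'. edge_cover V es F' \<longrightarrow> cover_cost es F \<le> cover_cost es F')"

definition cover_certificate :: "nat set \<Rightarrow> (nat \<Rightarrow> real) \<Rightarrow> stream \<Rightarrow> real \<Rightarrow> (nat \<Rightarrow> nat option) \<Rightarrow> bool" where
  "cover_certificate V b es \<delta> \<chi> \<longleftrightarrow>
     dom \<chi> \<subseteq> V \<and>
     (\<forall>v i. \<chi> v = Some i \<longrightarrow> (\<exists>e\<in>set es. eid_of e = i \<and> v \<in> verts_of e)) \<and>
     sum b (dom \<chi>) \<ge> \<delta> * sum b V"

definition image_cost :: "stream \<Rightarrow> (nat \<Rightarrow> nat option) \<Rightarrow> real" where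
  "image_cost es \<chi> = (\<Sum>t\<in>{t. t < length es \<and> eid_of (es ! t) \<in> ran \<chi>}. cost_of (es ! t))"

text \<open>Procedure COVER. State: (eid, eff); eff v = None encodes -infinity, eid v = None encodes NULL.\<close>
type_synonym cover_state = "(nat \<Rightarrow> nat option) \<times> (nat \<Rightarrow> int option)"

definition lev :: "real \<Rightarrow> real \<Rightarrow> int" where
  "lev bT c = \<lceil>log 2 (bT / c)\<rceil>"

definition eff_less :: "int option \<Rightarrow> int \<Rightarrow> bool" where
  "eff_less x l = (case x of None \<Rightarrow> True | Some k \<Rightarrow> k < l)"

definition eff_le :: "int option \<Rightarrow> int \<Rightarrow> bool" where
  "eff_le x r = (case x of None \<Rightarrow> True | Some k \<Rightarrow> k \<le> r)"

text \<open>Non-empty effective subsets (the empty set has benefit 0 and is never strictly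
  preferable to a non-empty effective set; choosing it means no update).\<close>
definition effective :: "(nat \<Rightarrow> real) \<Rightarrow> (nat \<Rightarrow> int option) \<Rightarrow> edge \<Rightarrow> nat set \<Rightarrow> bool" where
  "effective \<beta> eff e T \<longleftrightarrow> T \<subseteq> verts_of e \<and> T \<noteq> {} \<and>
     (\<forall>v\<in>T. eff_less (eff v) (lev (sum \<beta> T) (cost_of e)))"

definition cover_step :: "(nat \<Rightarrow> real) \<Rightarrow> edge \<Rightarrow> cover_state \<Rightarrow> cover_state \<Rightarrow> bool" where
  "cover_step \<beta> e s s' \<longleftrightarrow>
     ((\<not> (\<exists>T. effective \<beta> (snd s) e T)) \<and> s' = s) \<or>
     (\<exists>T. effective \<beta> (snd s) e T \<and>
          (\<forall>T'. effective \<beta> (snd s) e T' \<longrightarrow> sum \<beta> T' \<le> sum \<beta> T) \<and>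
          s' = ((\<lambda>v. if v \<in> T then Some (eid_of e) else fst s v),
                (\<lambda>v. if v \<in> T then Some (lev (sum \<beta> T) (cost_of e)) else snd s v)))"

text \<open>All possible runs of COVER (ties among maximal effective sets are resolved arbitrarily).\<close>
fun cover_run :: "(nat \<Rightarrow> real) \<Rightarrow> stream \<Rightarrow> cover_state \<Rightarrow> cover_state \<Rightarrow> bool" where
  "cover_run \<beta> [] s s' \<longleftrightarrow> s' = s"
| "cover_run \<beta> (e # es) s s' \<longleftrightarrow> (\<exists>s1. cover_step \<beta> e s s1 \<and> cover_run \<beta> es s1 s')"

definition cover_init :: cover_state where
  "cover_init = ((\<lambda>_. None), (\<lambda>_. None))"

definition emin_ok :: "nat set \<Rightarrow> stream \<Rightarrow> (nat \<Rightarrow> nat) \<Rightarrow> bool" where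
  "emin_ok V es emin \<longleftrightarrow>
     (\<forall>v\<in>V. \<exists>e\<in>set es. eid_of e = emin v \<and> v \<in> verts_of e \<and>
        (\<forall>e'\<in>set es. v \<in> verts_of e' \<longrightarrow> cost_of e \<le> cost_of e'))"

definition sssc_output ::
  "nat set \<Rightarrow> (nat \<Rightarrow> real) \<Rightarrow> cover_state \<Rightarrow> cover_state \<Rightarrow> (nat \<Rightarrow> nat) \<Rightarrow> real \<Rightarrow> (nat \<Rightarrow> nat option)" where
  "sssc_output V b s1 s2 emin \<epsilon> =
     (let n = card V in
      if \<epsilon> \<ge> 1 / sqrt (real n) then
        (let I = (\<lambda>r::int. {v\<in>V. eff_le (snd s1 v) r});
             rs = (GREATEST r::int. sum b (I r) \<le> \<epsilon> * sum b V)
         in (\<lambda>v. if v \<in> V - I rs then fst s1 v else None))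
      else
        (let I = (\<lambda>r::int. {v\<in>V. eff_le (snd s2 v) r});
             rs = (GREATEST r::int. real (card (I r)) \<le> sqrt (real n))
         in (\<lambda>v. if v \<in> V - I rs then fst s2 v
                 else if v \<in> I rs then Some (emin v) else None)))"

text \<open>min{1/x, y} with the convention min{1/0, y} = y.\<close>
definition min_inv :: "real \<Rightarrow> real \<Rightarrow> real" where
  "min_inv x y = (if x = 0 then y else min (1 / x) y)"

end

theory Submission
  imports Defs "HOL-Library.Option_ord"
begin

text \<open>
  When COVER assigns the edge e to a set T at level l, we have c(e) < \<beta>(T) 2^(1-l), so the
  cost of e can be charged to the vertices of T. With the potential
  \<Sum>{\<beta>(v) 2^(1-j) | v \<in> V, r < j \<le> eff(v)} this shows that the edges recorded for vertices
  of level above r cost at most 2^(1-r) \<beta>(V). Conversely, once e has been processed none of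
  its subsets is effective, so the vertices of e of level at most r have benefit at most
  2^r c(e); summing over the edges of OPT, the vertices of level at most r have benefit at
  most 2^r c(OPT). For the threshold r* chosen by SSSC, the first level m > r* at which new
  vertices appear has 2^m c(OPT) > \<epsilon> \<beta>(V) (with unit benefits: 2^m c(OPT) \<ge> \<surd>n), which turns
  the first bound into 4 c(OPT)/\<epsilon> (resp. 4 \<surd>n c(OPT)); the at most \<surd>n vertices sent to
  their cheapest edge cost at most c(OPT) each.
\<close>

text \<open>In the order of Option_ord, None (which encodes the level -\<infinity>) lies below every level.\<close>

lemma eff_less_iff: "eff_less x l \<longleftrightarrow> x < Some l"
  by (cases x) (auto simp: eff_less_def)

lemma eff_le_iff: "eff_le x r \<longleftrightarrow> x \<le> Some r"
  by (cases x) (auto simp: eff_le_def)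

lemma lev_mono: "0 < x \<Longrightarrow> x \<le> y \<Longrightarrow> 0 < c \<Longrightarrow> lev x c \<le> lev y c"
  unfolding lev_def by (intro ceiling_mono) (simp add: divide_right_mono)

lemma cost_less_lev:
  assumes "0 < x" "0 < c"
  shows "c < x * 2 powr (1 - lev x c)"
proof -
  have "lev x c - 1 < log 2 (x / c)"
    unfolding lev_def by linarith
  then have "2 powr (lev x c - 1) < x / c"
    using assms by (simp add: less_log_iff)
  then have "c * 2 powr (lev x c - 1) * 2 powr (1 - lev x c) < x * 2 powr (1 - lev x c)"
    using assms by (simp add: field_simps)
  then show ?thesis
    by (simp add: mult.assoc flip: powr_add)
qed

lemma le_powr_of_lev_le:
  assumes "0 < x" "0 < c" "lev x c \<le> k"
  shows "x \<le> 2 powr k * c"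
proof -
  have "log 2 (x / c) \<le> k"
    using assms(3) unfolding lev_def by linarith
  then have "x / c \<le> 2 powr k"
    using assms by (simp add: log_le_iff)
  then show ?thesis
    using assms by (simp add: field_simps)
qed

lemma powr_two_cancel:
  fixes X A B :: real and m :: int
  assumes "X \<le> 2 powr (2 - m) * A" "A \<le> 2 powr m * B"
  shows "X \<le> 4 * B"
proof -
  have "X \<le> 2 powr (2 - m) * (2 powr m * B)"
    using assms by (smt (verit) mult_left_mono powr_ge_zero)
  also have "\<dots> = 2 powr (2 - m + m) * B"
    by (simp only: mult.assoc of_int_add powr_add)
  also have "\<dots> = 4 * B"
    by simp
  finally show ?thesis .
qed

lemma Greatest_int_bounded:
  fixes P :: "int \<Rightarrow> bool"
  assumes "P a" and bounded: "\<And>r. P r \<Longrightarrow> r \<le> B"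
  shows "P (GREATEST r. P r)" and "P r \<Longrightarrow> r \<le> (GREATEST r. P r)"
proof -
  let ?S = "{r \<in> {a..B}. P r}"
  have finite: "finite ?S"
    by (rule finite_subset[of _ "{a..B}"]) auto
  have "a \<in> ?S"
    using assms by auto
  then have max_in: "Max ?S \<in> ?S"
    using finite by (intro Max_in) auto
  have max_ge: "r \<le> Max ?S" if "P r" for r
  proof (cases "a \<le> r")
    case True
    then show ?thesis
      using that bounded finite by (intro Max_ge) auto
  next
    case False
    then show ?thesis
      using max_in by auto
  qed
  have "(GREATEST r. P r) = Max ?S"
    using max_in max_ge by (intro Greatest_equality) auto
  then show "P (GREATEST r. P r)" and "P r \<Longrightarrow> r \<le> (GREATEST r. P r)"
    using max_in max_ge by auto
qed

lemma sum_UN_le: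
  fixes f :: "'a \<Rightarrow> real"
  assumes "finite I" "\<And>i. i \<in> I \<Longrightarrow> finite (A i)" "\<And>x. x \<in> (\<Union>i\<in>I. A i) \<Longrightarrow> 0 \<le> f x"
  shows "sum f (\<Union>i\<in>I. A i) \<le> (\<Sum>i\<in>I. sum f (A i))"
  using assms
proof (induction I rule: finite_induct)
  case (insert i I)
  let ?U = "\<Union>j\<in>I. A j"
  have "sum f (A i \<union> ?U) = sum f (A i) + sum f ?U - sum f (A i \<inter> ?U)"
    using insert by (intro sum_Un) auto
  moreover have "0 \<le> sum f (A i \<inter> ?U)"
    using insert.prems by (intro sum_nonneg) auto
  ultimately have "sum f (A i \<union> ?U) \<le> sum f (A i) + sum f ?U"
    by linarith
  then show ?case
    using insert by simp
qed simp

section \<open>Level sets and the potential\<close>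

definition id_cost :: "stream \<Rightarrow> nat set \<Rightarrow> real" where
  "id_cost es I = (\<Sum>t | t < length es \<and> eid_of (es ! t) \<in> I. cost_of (es ! t))"

lemma image_cost_eq_id_cost: "image_cost es \<chi> = id_cost es (ran \<chi>)"
  by (simp add: image_cost_def id_cost_def)

definition level_set :: "nat set \<Rightarrow> cover_state \<Rightarrow> int \<Rightarrow> nat set" where
  "level_set V s r = {v \<in> V. snd s v \<le> Some r}"

definition ids_above :: "nat set \<Rightarrow> cover_state \<Rightarrow> int \<Rightarrow> nat set" where
  "ids_above V s r = ran (fst s |` (V - level_set V s r))"

text \<open>\<open>level_potential r (Some k) = (\<Sum>j\<in>{r<..k}. 2 powr (1 - j))\<close>.\<close>

definition level_potential :: "int \<Rightarrow> int option \<Rightarrow> real" where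
  "level_potential r x = (case x of None \<Rightarrow> 0 | Some k \<Rightarrow>
     if r < k then 2 powr (1 - r) - 2 powr (1 - k) else 0)"

definition potential :: "nat set \<Rightarrow> (nat \<Rightarrow> real) \<Rightarrow> cover_state \<Rightarrow> int \<Rightarrow> real" where
  "potential V \<beta> s r = (\<Sum>v\<in>V. \<beta> v * level_potential r (snd s v))"

definition assign :: "nat set \<Rightarrow> nat \<Rightarrow> int \<Rightarrow> cover_state \<Rightarrow> cover_state" where
  "assign T i l s = ((\<lambda>v. if v \<in> T then Some i else fst s v), (\<lambda>v. if v \<in> T then Some l else snd s v))"

lemma cover_step_cases:
  assumes "cover_step \<beta> e s s'"
  obtains (idle) "\<not> (\<exists>T. effective \<beta> (snd s) e T)" "s' = s"
  | (assign) T where "effective \<beta> (snd s) e T"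
      "\<And>T'. effective \<beta> (snd s) e T' \<Longrightarrow> sum \<beta> T' \<le> sum \<beta> T"
      "s' = assign T (eid_of e) (lev (sum \<beta> T) (cost_of e)) s"
  using assms unfolding cover_step_def assign_def by blast

lemma effective_antimono:
  assumes "\<And>v. eff v \<le> eff' v" "effective \<beta> eff' e T"
  shows "effective \<beta> eff e T"
  using assms order.strict_trans1 unfolding effective_def eff_less_iff by blast

lemma level_potential_nonneg: "0 \<le> level_potential r x"
  unfolding level_potential_def by (auto split: option.split)

lemma level_potential_le: "level_potential r x \<le> 2 powr (1 - r)"
  unfolding level_potential_def by (auto split: option.split)

lemma level_potential_mono: "x \<le> y \<Longrightarrow> level_potential r x \<le> level_potential r y"
  by (cases x; cases y) (auto simp: level_potential_def level_potential_nonneg)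

lemma double_powr_le:
  assumes "k < l"
  shows "2 * 2 powr (1 - real_of_int l) \<le> 2 powr (1 - real_of_int k)"
proof -
  have "2 * 2 powr (1 - real_of_int l) = 2 powr (2 - real_of_int l)"
    using powr_add[of 2 1 "1 - real_of_int l"] by simp
  also have "\<dots> \<le> 2 powr (1 - real_of_int k)"
    using assms by simp
  finally show ?thesis .
qed

lemma level_potential_gain:
  assumes "x < Some l" "r < l"
  shows "level_potential r x + 2 powr (1 - l) \<le> level_potential r (Some l)"
  using assms double_powr_le[of r l] double_powr_le[of _ l]
  by (cases x) (auto simp: level_potential_def)

lemma ids_above_assign:
  "ids_above V (assign T i l s) r \<subseteq> ids_above V s r \<union> (if r < l then {i} else {})"
  unfolding ids_above_def level_set_def assign_def ran_def restrict_map_def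
  by (auto split: if_splits)

lemma level_set_mono: "r \<le> r' \<Longrightarrow> level_set V s r \<subseteq> level_set V s r'"
  unfolding level_set_def using order.trans by fastforce

lemma level_set_bounds:
  assumes "finite V" "\<And>v. v \<in> V \<Longrightarrow> snd s v \<noteq> None"
  obtains a B where "level_set V s a = {}" "\<And>r. B < r \<Longrightarrow> level_set V s r = V"
proof -
  let ?K = "(\<lambda>v. the (snd s v)) ` V"
  have "Min ?K \<le> the (snd s v)" "the (snd s v) \<le> Max ?K" if "v \<in> V" for v
    using assms(1) that by auto
  then have "level_set V s (Min ?K - 1) = {}" and "\<And>r. Max ?K < r \<Longrightarrow> level_set V s r = V"
    unfolding level_set_def using assms(2) by fastforce+
  then show ?thesis
    using that by blast
qed

lemma level_set_jump:
  assumes "finite V" "\<And>v. v \<in> V \<Longrightarrow> snd s v \<noteq> None" "level_set V s r \<noteq> V"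
  obtains m where "r < m" "level_set V s (m - 1) = level_set V s r"
    "\<not> level_set V s m \<subseteq> level_set V s r"
proof -
  let ?D = "V - level_set V s r"
  define m where "m = Min ((\<lambda>v. the (snd s v)) ` ?D)"
  have D: "finite ?D" "?D \<noteq> {}"
    using assms unfolding level_set_def by auto
  then obtain v0 where v0: "v0 \<in> ?D" "snd s v0 = Some m"
    unfolding m_def using assms(2) Min_in[of "(\<lambda>v. the (snd s v)) ` ?D"] by fastforce
  have min: "Some m \<le> snd s v" if "v \<in> ?D" for v
  proof -
    have "m \<le> the (snd s v)"
      unfolding m_def using D that by simp
    then show ?thesis
      using that assms(2)[of v] by (cases "snd s v") auto
  qed
  have "r < m"
    using v0 unfolding level_set_def by auto
  moreover have "level_set V s (m - 1) \<subseteq> level_set V s r"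
    using min unfolding level_set_def by (fastforce dest: order.trans)
  moreover have "level_set V s r \<subseteq> level_set V s (m - 1)"
    using \<open>r < m\<close> by (intro level_set_mono) simp
  moreover have "v0 \<in> level_set V s m - level_set V s r"
    using v0 unfolding level_set_def by auto
  ultimately show ?thesis
    using that by blast
qed

section \<open>Cost accounting for COVER\<close>

locale cover_instance =
  fixes V :: "nat set" and \<beta> :: "nat \<Rightarrow> real" and es :: stream
  assumes finite_V: "finite V"
    and benefit_pos: "\<And>v. v \<in> V \<Longrightarrow> 0 < \<beta> v"
    and edge_subset: "\<And>e. e \<in> set es \<Longrightarrow> verts_of e \<subseteq> V"
    and cost_pos: "\<And>e. e \<in> set es \<Longrightarrow> 0 < cost_of e"
    and distinct_ids: "distinct (map eid_of es)"

lemma weighted_hypergraph_cover_instance: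
  assumes "weighted_hypergraph V b es" "\<And>v. v \<in> V \<Longrightarrow> 0 < \<beta> v"
  shows "cover_instance V \<beta> es"
  using assms unfolding weighted_hypergraph_def cover_instance_def by auto

context cover_instance
begin

lemma nth_cost_nonneg: "t < length es \<Longrightarrow> 0 \<le> cost_of (es ! t)"
  using cost_pos[OF nth_mem] less_imp_le by blast

lemma id_cost_mono: "I \<subseteq> J \<Longrightarrow> id_cost es I \<le> id_cost es J"
  unfolding id_cost_def by (rule sum_mono2) (auto intro: nth_cost_nonneg)

lemma id_cost_Un: "id_cost es (I \<union> J) \<le> id_cost es I + id_cost es J"
proof -
  let ?pos = "\<lambda>K. {t. t < length es \<and> eid_of (es ! t) \<in> K}"
  have "?pos (I \<union> J) = ?pos I \<union> ?pos J"
    by auto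
  then have "id_cost es (I \<union> J) =
      id_cost es I + id_cost es J - (\<Sum>t\<in>?pos I \<inter> ?pos J. cost_of (es ! t))"
    unfolding id_cost_def by (simp add: sum_Un)
  moreover have "0 \<le> (\<Sum>t\<in>?pos I \<inter> ?pos J. cost_of (es ! t))"
    by (intro sum_nonneg) (auto intro: nth_cost_nonneg)
  ultimately show ?thesis
    by linarith
qed

lemma id_cost_edge_le:
  assumes "e \<in> set es"
  shows "id_cost es {eid_of e} \<le> cost_of e"
proof -
  obtain t0 where t0: "t0 < length es" "es ! t0 = e"
    using assms by (auto simp: in_set_conv_nth)
  have "{t. t < length es \<and> eid_of (es ! t) \<in> {eid_of e}} = {t0}"
    using t0 distinct_ids by (auto simp: distinct_conv_nth)
  then show ?thesis
    unfolding id_cost_def using t0 by simp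
qed

lemma id_cost_image_le:
  "finite A \<Longrightarrow> id_cost es (f ` A) \<le> (\<Sum>a\<in>A. id_cost es {f a})"
proof (induction A rule: finite_induct)
  case (insert a A)
  have "id_cost es (f ` insert a A) \<le> id_cost es {f a} + id_cost es (f ` A)"
    using id_cost_Un[of "{f a}" "f ` A"] by simp
  then show ?case
    using insert by simp
qed (simp add: id_cost_def)

lemma sum_benefit_pos: "A \<subseteq> V \<Longrightarrow> A \<noteq> {} \<Longrightarrow> 0 < sum \<beta> A"
  using finite_V benefit_pos by (intro sum_pos) (auto intro: finite_subset)

lemma sum_benefit_mono: "A \<subseteq> B \<Longrightarrow> B \<subseteq> V \<Longrightarrow> sum \<beta> A \<le> sum \<beta> B"
  using finite_V benefit_pos by (intro sum_mono2) (auto intro: finite_subset less_imp_le)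

lemma lev_benefit_mono:
  assumes "e \<in> set es" "A \<noteq> {}" "A \<subseteq> B" "B \<subseteq> V"
  shows "lev (sum \<beta> A) (cost_of e) \<le> lev (sum \<beta> B) (cost_of e)"
  using assms sum_benefit_pos sum_benefit_mono cost_pos by (intro lev_mono) auto

lemma effective_union_after_assign:
  assumes e: "e \<in> set es" and T: "effective \<beta> eff e T" and l: "l = lev (sum \<beta> T) (cost_of e)"
    and S: "effective \<beta> (\<lambda>v. if v \<in> T then Some l else eff v) e S"
  shows "effective \<beta> eff e (T \<union> S)"
proof -
  have TS: "T \<subseteq> verts_of e" "T \<noteq> {}" "S \<subseteq> verts_of e" "S \<noteq> {}"
    using T S unfolding effective_def by auto
  then have "T \<union> S \<subseteq> V"
    using edge_subset[OF e] by auto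
  then have "l \<le> lev (sum \<beta> (T \<union> S)) (cost_of e)"
    and "lev (sum \<beta> S) (cost_of e) \<le> lev (sum \<beta> (T \<union> S)) (cost_of e)"
    unfolding l using TS by (auto intro: lev_benefit_mono[OF e])
  moreover have "eff v < Some l" if "v \<in> T" for v
    using T that l unfolding effective_def eff_less_iff by auto
  moreover have "eff v < Some (lev (sum \<beta> S) (cost_of e))" if "v \<in> S - T" for v
    using S that unfolding effective_def eff_less_iff by auto
  ultimately show ?thesis
    using TS unfolding effective_def eff_less_iff
    by (metis (no_types, lifting) DiffI Un_iff Un_subset_iff Un_empty less_le_trans less_eq_option_Some)
qed

lemma not_effective_after_assign:
  assumes e: "e \<in> set es" and T: "effective \<beta> eff e T" and l: "l = lev (sum \<beta> T) (cost_of e)"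
    and maximal: "\<And>T'. effective \<beta> eff e T' \<Longrightarrow> sum \<beta> T' \<le> sum \<beta> T"
  shows "\<not> effective \<beta> (\<lambda>v. if v \<in> T then Some l else eff v) e S"
proof
  assume S: "effective \<beta> (\<lambda>v. if v \<in> T then Some l else eff v) e S"
  have TS: "T \<subseteq> V" "S \<subseteq> V" "S \<noteq> {}"
    using T S edge_subset[OF e] unfolding effective_def by auto
  have "sum \<beta> (T \<union> (S - T)) = sum \<beta> T + sum \<beta> (S - T)"
    using TS finite_V by (intro sum.union_disjoint) (auto intro: finite_subset)
  moreover have "sum \<beta> (T \<union> S) \<le> sum \<beta> T"
    using maximal effective_union_after_assign[OF e T l S] by blast
  ultimately have "S \<subseteq> T"
    using sum_benefit_pos[of "S - T"] TS by (cases "S - T = {}") (auto simp: Un_Diff_cancel)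
  then have "lev (sum \<beta> S) (cost_of e) \<le> l"
    unfolding l using TS by (intro lev_benefit_mono[OF e])
  moreover obtain v where "v \<in> S"
    using TS by auto
  ultimately show False
    using S \<open>S \<subseteq> T\<close> unfolding effective_def eff_less_iff by fastforce
qed

lemma potential_le: "potential V \<beta> s r \<le> 2 powr (1 - r) * sum \<beta> V"
  unfolding potential_def sum_distrib_left
  using benefit_pos level_potential_le
  by (intro sum_mono) (auto intro: mult_left_mono less_imp_le simp: mult.commute)

lemma potential_mono:
  assumes "\<And>v. snd s v \<le> snd s' v"
  shows "potential V \<beta> s r \<le> potential V \<beta> s' r"
  unfolding potential_def
  using assms benefit_pos level_potential_mono
  by (intro sum_mono mult_left_mono) (auto intro: less_imp_le)

lemma assign_raises_levels:
  assumes "effective \<beta> (snd s) e T" "l = lev (sum \<beta> T) (cost_of e)"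
  shows "snd s v \<le> snd (assign T i l s) v"
  using assms unfolding effective_def eff_less_iff assign_def by auto

lemma potential_assign_gain:
  assumes e: "e \<in> set es" and T: "effective \<beta> (snd s) e T"
    and l: "l = lev (sum \<beta> T) (cost_of e)" and "r < l"
  shows "potential V \<beta> s r + cost_of e \<le> potential V \<beta> (assign T i l s) r"
proof -
  let ?s' = "assign T i l s"
  have TV: "T \<subseteq> V" "T \<noteq> {}"
    using T edge_subset[OF e] unfolding effective_def by auto
  have "cost_of e < sum \<beta> T * 2 powr (1 - l)"
    unfolding l using sum_benefit_pos[OF TV] cost_pos[OF e] by (rule cost_less_lev)
  also have "\<dots> = (\<Sum>v\<in>T. \<beta> v * 2 powr (1 - l))"
    by (simp add: sum_distrib_right)
  also have "\<dots> \<le> (\<Sum>v\<in>T. \<beta> v * level_potential r (snd ?s' v) - \<beta> v * level_potential r (snd s v))"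
  proof (intro sum_mono)
    fix v assume "v \<in> T"
    then have "level_potential r (snd s v) + 2 powr (1 - l) \<le> level_potential r (snd ?s' v)"
      using T \<open>r < l\<close> level_potential_gain unfolding effective_def eff_less_iff l assign_def by auto
    then show "\<beta> v * 2 powr (1 - l) \<le> \<beta> v * level_potential r (snd ?s' v) - \<beta> v * level_potential r (snd s v)"
      using benefit_pos[of v] TV \<open>v \<in> T\<close> by (auto simp flip: right_diff_distrib intro: mult_left_mono)
  qed
  also have "\<dots> = (\<Sum>v\<in>V. \<beta> v * level_potential r (snd ?s' v) - \<beta> v * level_potential r (snd s v))"
    using finite_V TV by (intro sum.mono_neutral_left) (auto simp: assign_def)
  also have "\<dots> = potential V \<beta> ?s' r - potential V \<beta> s r"
    unfolding potential_def by (simp add: sum_subtractf)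
  finally show ?thesis
    by simp
qed

lemma id_cost_above_assign:
  assumes e: "e \<in> set es" and T: "effective \<beta> (snd s) e T"
    and l: "l = lev (sum \<beta> T) (cost_of e)"
    and bound: "id_cost es (ids_above V s r) \<le> potential V \<beta> s r"
  shows "id_cost es (ids_above V (assign T (eid_of e) l s) r)
    \<le> potential V \<beta> (assign T (eid_of e) l s) r"
proof (cases "r < l")
  case True
  have "id_cost es (ids_above V (assign T (eid_of e) l s) r)
      \<le> id_cost es (ids_above V s r \<union> {eid_of e})"
    using ids_above_assign[of V T "eid_of e" l s r] True by (intro id_cost_mono) auto
  also have "\<dots> \<le> potential V \<beta> s r + cost_of e"
    using order.trans[OF id_cost_Un add_mono[OF bound id_cost_edge_le[OF e]]] .
  also have "\<dots> \<le> potential V \<beta> (assign T (eid_of e) l s) r"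
    using potential_assign_gain[OF e T l True] .
  finally show ?thesis .
next
  case False
  have "id_cost es (ids_above V (assign T (eid_of e) l s) r) \<le> id_cost es (ids_above V s r)"
    using ids_above_assign[of V T "eid_of e" l s r] False by (intro id_cost_mono) auto
  also have "\<dots> \<le> potential V \<beta> (assign T (eid_of e) l s) r"
    using bound potential_mono[OF assign_raises_levels[OF T l]] by (rule order.trans)
  finally show ?thesis .
qed

text \<open>The last conjunct is a charging argument: the identifier recorded at a level above
  \<open>r\<close> was paid for by the increase of the potential when its edge was processed.\<close>

definition cover_invariant :: "stream \<Rightarrow> cover_state \<Rightarrow> bool" where
  "cover_invariant P s \<longleftrightarrow>
     (\<forall>v. fst s v = None \<longleftrightarrow> snd s v = None) \<and>
     (\<forall>v i. fst s v = Some i \<longrightarrow> (\<exists>e\<in>set es. eid_of e = i \<and> v \<in> verts_of e)) \<and>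
     (\<forall>e\<in>set P. \<forall>T. \<not> effective \<beta> (snd s) e T) \<and>
     (\<forall>r. id_cost es (ids_above V s r) \<le> potential V \<beta> s r)"

lemma cover_invariant_step:
  assumes step: "cover_step \<beta> e s s'" and e: "e \<in> set es" and inv: "cover_invariant P s"
  shows "cover_invariant (P @ [e]) s'"
  using step
proof (cases rule: cover_step_cases)
  case idle
  then show ?thesis
    using inv unfolding cover_invariant_def by auto
next
  case (assign T)
  define l where "l = lev (sum \<beta> T) (cost_of e)"
  have s': "s' = assign T (eid_of e) l s"
    using assign l_def by simp
  have "\<not> effective \<beta> (snd s') e S" for S
    using not_effective_after_assign[OF e assign(1) l_def assign(2)] unfolding s' assign_def by simp
  moreover have "\<not> effective \<beta> (snd s') e' S" if "\<not> effective \<beta> (snd s) e' S" for e' S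
    using that effective_antimono assign_raises_levels[OF assign(1) l_def] unfolding s' by blast
  moreover have "id_cost es (ids_above V s' r) \<le> potential V \<beta> s' r" for r
    using inv id_cost_above_assign[OF e assign(1) l_def] unfolding s' cover_invariant_def by blast
  moreover have "T \<subseteq> verts_of e"
    using assign(1) unfolding effective_def by simp
  ultimately show ?thesis
    using inv e unfolding cover_invariant_def s' by (auto simp: assign_def)
qed

lemma cover_invariant_run:
  "cover_run \<beta> xs s s' \<Longrightarrow> set xs \<subseteq> set es \<Longrightarrow> cover_invariant P s \<Longrightarrow> cover_invariant (P @ xs) s'"
proof (induction xs arbitrary: P s)
  case (Cons x xs)
  then obtain s1 where "cover_step \<beta> x s s1" "cover_run \<beta> xs s1 s'"
    by auto
  then show ?case
    using Cons cover_invariant_step[of x s s1 P] Cons.IH[of s1 "P @ [x]"] by simp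
qed simp

lemma cover_invariant_final:
  assumes "cover_run \<beta> es cover_init s"
  shows "cover_invariant es s"
proof -
  have "cover_invariant [] cover_init"
    unfolding cover_invariant_def cover_init_def ids_above_def potential_def level_potential_def id_cost_def
    by simp
  then show ?thesis
    using cover_invariant_run[OF assms subset_refl, of "[]"] by simp
qed

lemma assigned_final:
  assumes inv: "cover_invariant es s" and "every_vertex_covered V es" "v \<in> V"
  shows "snd s v \<noteq> None"
proof
  assume none: "snd s v = None"
  obtain e where "e \<in> set es" "v \<in> verts_of e"
    using assms unfolding every_vertex_covered_def by blast
  moreover have "effective \<beta> (snd s) e {v}"
    using calculation none unfolding effective_def eff_less_iff by simp
  ultimately show False
    using inv unfolding cover_invariant_def by blast
qed

lemma sum_edge_level_set_le:
  assumes inv: "cover_invariant es s" and e: "e \<in> set es"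
  shows "sum \<beta> (verts_of e \<inter> level_set V s r) \<le> 2 powr r * cost_of e"
proof (cases "verts_of e \<inter> level_set V s r = {}")
  case False
  let ?S = "verts_of e \<inter> level_set V s r"
  have "\<not> effective \<beta> (snd s) e ?S"
    using inv e unfolding cover_invariant_def by blast
  then obtain v where "v \<in> ?S" "Some (lev (sum \<beta> ?S) (cost_of e)) \<le> snd s v"
    using False unfolding effective_def eff_less_iff by (auto simp: not_less)
  then have "lev (sum \<beta> ?S) (cost_of e) \<le> r"
    unfolding level_set_def using order.trans by fastforce
  moreover have "0 < sum \<beta> ?S"
    using False edge_subset[OF e] by (intro sum_benefit_pos) auto
  ultimately show ?thesis
    using cost_pos[OF e] by (intro le_powr_of_lev_le) auto
qed (use cost_pos[OF e] in simp)

lemma sum_level_set_le: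
  assumes inv: "cover_invariant es s" and OPT: "edge_cover V es OPT"
  shows "sum \<beta> (level_set V s r) \<le> 2 powr r * cover_cost es OPT"
proof -
  have OPT_sub: "OPT \<subseteq> {..<length es}" and "(\<Union>t\<in>OPT. verts_of (es ! t)) = V"
    using OPT unfolding edge_cover_def by auto
  then have "sum \<beta> (level_set V s r) = sum \<beta> (\<Union>t\<in>OPT. verts_of (es ! t) \<inter> level_set V s r)"
    unfolding level_set_def by (intro arg_cong[where f = "sum \<beta>"]) auto
  also have "\<dots> \<le> (\<Sum>t\<in>OPT. sum \<beta> (verts_of (es ! t) \<inter> level_set V s r))"
    using OPT_sub finite_V benefit_pos
    by (intro sum_UN_le) (auto intro: finite_subset less_imp_le simp: level_set_def)
  also have "\<dots> \<le> (\<Sum>t\<in>OPT. 2 powr r * cost_of (es ! t))"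
    using OPT_sub by (intro sum_mono sum_edge_level_set_le[OF inv]) auto
  finally show ?thesis
    by (simp add: cover_cost_def sum_distrib_left)
qed

lemma id_cost_above_le:
  "cover_invariant es s \<Longrightarrow> id_cost es (ids_above V s r) \<le> 2 powr (1 - r) * sum \<beta> V"
  using potential_le order.trans unfolding cover_invariant_def by blast

end

section \<open>The two regimes of SSSC\<close>

lemma card_threshold:
  assumes "finite V" "V \<noteq> {}" "\<And>v. v \<in> V \<Longrightarrow> snd s v \<noteq> None"
  defines "rs \<equiv> GREATEST r. real (card (level_set V s r)) \<le> sqrt (real (card V))"
  shows "real (card (level_set V s rs)) \<le> sqrt (real (card V))"
    and "rs < m \<Longrightarrow> level_set V s m \<noteq> {} \<Longrightarrow> sqrt (real (card V)) \<le> real (card (level_set V s m))"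
proof -
  have card_le: "card (level_set V s r) \<le> card V" for r
    using assms(1) by (intro card_mono) (auto simp: level_set_def)
  let ?n = "sqrt (real (card V))"
  have "real (card (level_set V s rs)) \<le> ?n \<and>
      (\<forall>m. rs < m \<longrightarrow> level_set V s m \<noteq> {} \<longrightarrow> ?n \<le> real (card (level_set V s m)))"
  proof (cases "card V = 1")
    case True
    \<comment> \<open>every \<open>r\<close> satisfies the predicate, so \<open>rs\<close> is unspecified, but the claims hold trivially\<close>
    then show ?thesis
      using card_le[of rs] assms(1) by (auto simp: Suc_le_eq card_gt_0_iff level_set_def)
  next
    case False
    then have "card V \<ge> 2"
      using assms(1,2) by (metis One_nat_def Suc_1 Suc_leI card_gt_0_iff le_neq_implies_less)
    then have sqrt_less: "?n < real (card V)"
      by (intro real_less_lsqrt) (auto simp: power2_eq_square)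
    obtain a B where "level_set V s a = {}" "\<And>r. B < r \<Longrightarrow> level_set V s r = V"
      using level_set_bounds assms(1,3) by blast
    then have "real (card (level_set V s a)) \<le> ?n"
      and "\<And>r. real (card (level_set V s r)) \<le> ?n \<Longrightarrow> r \<le> B"
      using sqrt_less by (auto simp: not_less[symmetric])
    from Greatest_int_bounded[where P = "\<lambda>r. real (card (level_set V s r)) \<le> ?n", OF this]
    show ?thesis
      unfolding rs_def by (auto simp: not_le[symmetric])
  qed
  then show "real (card (level_set V s rs)) \<le> ?n"
    and "rs < m \<Longrightarrow> level_set V s m \<noteq> {} \<Longrightarrow> ?n \<le> real (card (level_set V s m))"
    by auto
qed

lemma min_inv_large_eps:
  assumes "0 < x" "1 / sqrt x \<le> \<epsilon>"
  shows "min_inv \<epsilon> (sqrt x) = 1 / \<epsilon>"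
proof -
  have "0 < \<epsilon>"
    using assms by (smt (verit) divide_pos_pos real_sqrt_gt_zero)
  then have "1 / \<epsilon> \<le> sqrt x"
    using assms by (simp add: field_simps)
  then show ?thesis
    using \<open>0 < \<epsilon>\<close> unfolding min_inv_def by simp
qed

lemma min_inv_small_eps:
  assumes "0 \<le> \<epsilon>" "\<epsilon> < 1 / sqrt x"
  shows "min_inv \<epsilon> (sqrt x) = sqrt x"
proof (cases "\<epsilon> = 0")
  case False
  have "0 < sqrt x"
    using assms by (smt (verit) divide_le_0_iff real_sqrt_ge_zero)
  then have "sqrt x < 1 / \<epsilon>"
    using assms False by (simp add: field_simps)
  then show ?thesis
    using False unfolding min_inv_def by simp
qed (simp add: min_inv_def)

lemma sssc_output_large_eps:
  assumes "1 / sqrt (real (card V)) \<le> \<epsilon>"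
  shows "sssc_output V b s1 s2 emin \<epsilon> =
    fst s1 |` (V - level_set V s1 (GREATEST r. sum b (level_set V s1 r) \<le> \<epsilon> * sum b V))"
  using assms unfolding sssc_output_def level_set_def eff_le_iff restrict_map_def Let_def by simp

lemma sssc_output_small_eps:
  assumes "\<not> 1 / sqrt (real (card V)) \<le> \<epsilon>"
  shows "sssc_output V b s1 s2 emin \<epsilon> =
    (let I = level_set V s2 (GREATEST r. real (card (level_set V s2 r)) \<le> sqrt (real (card V)))
     in fst s2 |` (V - I) ++ (Some \<circ> emin) |` I)"
  using assms unfolding sssc_output_def level_set_def eff_le_iff Let_def
  by (auto simp: fun_eq_iff map_add_def restrict_map_def)

context cover_instance
begin

lemma benefit_threshold:
  assumes "V \<noteq> {}" "\<And>v. v \<in> V \<Longrightarrow> snd s v \<noteq> None" "0 \<le> \<epsilon>" "\<epsilon> < 1"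
  defines "rs \<equiv> GREATEST r. sum \<beta> (level_set V s r) \<le> \<epsilon> * sum \<beta> V"
  shows "sum \<beta> (level_set V s rs) \<le> \<epsilon> * sum \<beta> V"
    and "rs < m \<Longrightarrow> \<epsilon> * sum \<beta> V < sum \<beta> (level_set V s m)"
proof -
  have pos: "0 < sum \<beta> V"
    using assms(1) by (intro sum_benefit_pos) auto
  obtain a B where "level_set V s a = {}" "\<And>r. B < r \<Longrightarrow> level_set V s r = V"
    using level_set_bounds finite_V assms(2) by blast
  then have "sum \<beta> (level_set V s a) \<le> \<epsilon> * sum \<beta> V"
    and "\<And>r. sum \<beta> (level_set V s r) \<le> \<epsilon> * sum \<beta> V \<Longrightarrow> r \<le> B"
    using pos assms(3,4) by (simp, metis not_less mult_less_cancel_right2)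
  from Greatest_int_bounded[where P = "\<lambda>r. sum \<beta> (level_set V s r) \<le> \<epsilon> * sum \<beta> V", OF this]
  show "sum \<beta> (level_set V s rs) \<le> \<epsilon> * sum \<beta> V"
    and "rs < m \<Longrightarrow> \<epsilon> * sum \<beta> V < sum \<beta> (level_set V s m)"
    unfolding rs_def by (auto simp: not_le[symmetric])
qed

lemma id_cost_above_threshold:
  assumes inv: "cover_invariant es s" and assigned: "\<And>v. v \<in> V \<Longrightarrow> snd s v \<noteq> None"
    and threshold: "\<And>m. r < m \<Longrightarrow> \<not> level_set V s m \<subseteq> level_set V s r \<Longrightarrow> sum \<beta> V \<le> 2 powr m * B"
    and "0 \<le> B"
  shows "id_cost es (ids_above V s r) \<le> 4 * B"
proof (cases "level_set V s r = V")
  case True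
  then show ?thesis
    using \<open>0 \<le> B\<close> by (simp add: ids_above_def id_cost_def)
next
  case False
  then obtain m where m: "r < m" "level_set V s (m - 1) = level_set V s r"
    "\<not> level_set V s m \<subseteq> level_set V s r"
    using level_set_jump finite_V assigned by blast
  then have "id_cost es (ids_above V s r) \<le> 2 powr (2 - m) * sum \<beta> V"
    using id_cost_above_le[OF inv, of "m - 1"] by (simp add: ids_above_def)
  then show ?thesis
    using threshold[OF m(1,3)] by (rule powr_two_cancel)
qed

lemma id_cost_emin_le:
  assumes "emin_ok V es emin" "edge_cover V es OPT" "v \<in> V"
  shows "id_cost es {emin v} \<le> cover_cost es OPT"
proof -
  obtain e where e: "e \<in> set es" "eid_of e = emin v"
    and cheapest: "\<And>e'. e' \<in> set es \<Longrightarrow> v \<in> verts_of e' \<Longrightarrow> cost_of e \<le> cost_of e'"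
    using assms(1,3) unfolding emin_ok_def by blast
  obtain t where t: "t \<in> OPT" "v \<in> verts_of (es ! t)" and OPT_sub: "OPT \<subseteq> {..<length es}"
    using assms(2,3) unfolding edge_cover_def by blast
  have "id_cost es {emin v} \<le> cost_of e"
    using id_cost_edge_le[OF e(1)] e(2) by simp
  also have "\<dots> \<le> cost_of (es ! t)"
    using t OPT_sub cheapest[OF nth_mem] by auto
  also have "\<dots> \<le> cover_cost es OPT"
    unfolding cover_cost_def using t(1) OPT_sub nth_cost_nonneg
    by (intro member_le_sum) (auto intro: finite_subset)
  finally show ?thesis .
qed

lemma id_cost_emin_image_le:
  assumes "emin_ok V es emin" "edge_cover V es OPT" "I \<subseteq> V"
  shows "id_cost es (emin ` I) \<le> real (card I) * cover_cost es OPT"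
proof -
  have "id_cost es (emin ` I) \<le> (\<Sum>v\<in>I. id_cost es {emin v})"
    using assms(3) finite_V by (intro id_cost_image_le) (auto intro: finite_subset)
  also have "\<dots> \<le> real (card I) * cover_cost es OPT"
    using id_cost_emin_le[OF assms(1,2)] assms(3) by (intro sum_bounded_above) auto
  finally show ?thesis .
qed

lemma cover_cost_nonneg: "edge_cover V es OPT \<Longrightarrow> 0 \<le> cover_cost es OPT"
  unfolding cover_cost_def edge_cover_def by (rule sum_nonneg) (auto intro: nth_cost_nonneg)

lemma dom_restrict_final:
  assumes "cover_invariant es s" "\<And>v. v \<in> V \<Longrightarrow> snd s v \<noteq> None" "A \<subseteq> V"
  shows "dom (fst s |` A) = A"
proof -
  have "fst s v \<noteq> None" if "v \<in> A" for v
    using assms that unfolding cover_invariant_def by blast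
  then show ?thesis
    by (auto simp: restrict_map_def split: if_splits)
qed

lemma id_cost_above_card_threshold:
  assumes unit: "\<And>v. v \<in> V \<Longrightarrow> \<beta> v = 1" and inv: "cover_invariant es s"
    and assigned: "\<And>v. v \<in> V \<Longrightarrow> snd s v \<noteq> None" and OPT: "edge_cover V es OPT" and "V \<noteq> {}"
  defines "rs \<equiv> GREATEST r. real (card (level_set V s r)) \<le> sqrt (real (card V))"
  shows "id_cost es (ids_above V s rs) \<le> 4 * (sqrt (real (card V)) * cover_cost es OPT)"
proof (intro id_cost_above_threshold[OF inv assigned])
  let ?n = "sqrt (real (card V))"
  have card: "sum \<beta> A = real (card A)" if "A \<subseteq> V" for A
    using unit that by (simp add: subset_iff)
  fix m assume "rs < m" "\<not> level_set V s m \<subseteq> level_set V s rs"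
  then have "?n \<le> sum \<beta> (level_set V s m)"
    using card_threshold(2)[OF finite_V \<open>V \<noteq> {}\<close> assigned, of m] card[of "level_set V s m"]
    unfolding rs_def level_set_def by auto
  also have "\<dots> \<le> 2 powr m * cover_cost es OPT"
    using sum_level_set_le[OF inv OPT] .
  finally show "sum \<beta> V \<le> 2 powr m * (?n * cover_cost es OPT)"
    using card[of V] mult_left_mono[of ?n _ ?n] by (simp add: mult.left_commute)
qed (use cover_cost_nonneg[OF OPT] in auto)

lemma cover_certificate_restrict:
  assumes "cover_invariant es s" "\<And>v. v \<in> V \<Longrightarrow> snd s v \<noteq> None" "A \<subseteq> V"
    "\<delta> * sum \<beta> V \<le> sum \<beta> A"
  shows "cover_certificate V \<beta> es \<delta> (fst s |` A)"
  using assms dom_restrict_final[OF assms(1-3)] unfolding cover_certificate_def cover_invariant_def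
  by (auto simp: restrict_map_def split: if_splits)

lemma id_cost_above_benefit_threshold:
  assumes inv: "cover_invariant es s" and assigned: "\<And>v. v \<in> V \<Longrightarrow> snd s v \<noteq> None"
    and OPT: "edge_cover V es OPT" and "V \<noteq> {}" "0 < \<epsilon>" "\<epsilon> < 1"
  defines "rs \<equiv> GREATEST r. sum \<beta> (level_set V s r) \<le> \<epsilon> * sum \<beta> V"
  shows "id_cost es (ids_above V s rs) \<le> 4 * (cover_cost es OPT / \<epsilon>)"
proof (intro id_cost_above_threshold[OF inv assigned])
  fix m assume "rs < m"
  then have "\<epsilon> * sum \<beta> V \<le> 2 powr m * cover_cost es OPT"
    using benefit_threshold(2)[OF \<open>V \<noteq> {}\<close> assigned, of \<epsilon> m] sum_level_set_le[OF inv OPT, of m]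
      assms(5,6) unfolding rs_def by simp
  then show "sum \<beta> V \<le> 2 powr m * (cover_cost es OPT / \<epsilon>)"
    using \<open>0 < \<epsilon>\<close> by (simp add: field_simps)
qed (use cover_cost_nonneg[OF OPT] \<open>0 < \<epsilon>\<close> in auto)

lemma sssc_large_eps:
  assumes run: "cover_run \<beta> es cover_init s1" and cov: "every_vertex_covered V es"
    and OPT: "edge_cover V es OPT" and eps: "0 \<le> \<epsilon>" "\<epsilon> < 1"
    and large: "1 / sqrt (real (card V)) \<le> \<epsilon>"
  shows "cover_certificate V \<beta> es (1 - \<epsilon>) (sssc_output V \<beta> s1 s2 emin \<epsilon>) \<and>
    image_cost es (sssc_output V \<beta> s1 s2 emin \<epsilon>)
      \<le> 5 * min_inv \<epsilon> (sqrt (real (card V))) * cover_cost es OPT"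
proof (cases "V = {}")
  case True
  then have "sssc_output V \<beta> s1 s2 emin \<epsilon> = Map.empty"
    using sssc_output_large_eps[OF large] by simp
  then show ?thesis
    using True eps by (simp add: cover_certificate_def image_cost_eq_id_cost id_cost_def min_inv_def)
next
  case False
  define rs where "rs = (GREATEST r. sum \<beta> (level_set V s1 r) \<le> \<epsilon> * sum \<beta> V)"
  have inv: "cover_invariant es s1" and assigned: "\<And>v. v \<in> V \<Longrightarrow> snd s1 v \<noteq> None"
    using cover_invariant_final[OF run] assigned_final cov by auto
  have out: "sssc_output V \<beta> s1 s2 emin \<epsilon> = fst s1 |` (V - level_set V s1 rs)"
    unfolding rs_def by (rule sssc_output_large_eps[OF large])
  have "sum \<beta> (V - level_set V s1 rs) = sum \<beta> V - sum \<beta> (level_set V s1 rs)"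
    using finite_V by (intro sum_diff) (auto simp: level_set_def)
  then have "(1 - \<epsilon>) * sum \<beta> V \<le> sum \<beta> (V - level_set V s1 rs)"
    using benefit_threshold(1)[OF False assigned eps] unfolding rs_def by (simp add: algebra_simps)
  then have certificate: "cover_certificate V \<beta> es (1 - \<epsilon>) (fst s1 |` (V - level_set V s1 rs))"
    using inv assigned by (intro cover_certificate_restrict) auto
  have card: "0 < real (card V)"
    using False finite_V by (simp add: card_gt_0_iff)
  then have "0 < \<epsilon>"
    using large by (smt (verit) divide_pos_pos real_sqrt_gt_zero)
  then have "id_cost es (ids_above V s1 rs) \<le> 4 * (cover_cost es OPT / \<epsilon>)"
    unfolding rs_def using inv assigned OPT False eps by (intro id_cost_above_benefit_threshold) auto
  also have "\<dots> \<le> 5 * (1 / \<epsilon>) * cover_cost es OPT"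
    using cover_cost_nonneg[OF OPT] \<open>0 < \<epsilon>\<close> by (simp add: divide_right_mono)
  finally show ?thesis
    using certificate by (simp add: out image_cost_eq_id_cost ids_above_def min_inv_large_eps[OF card large])
qed

lemma sssc_small_eps:
  assumes run: "cover_run (\<lambda>_. 1) es cover_init s2" and cov: "every_vertex_covered V es"
    and OPT: "edge_cover V es OPT" and emin: "emin_ok V es emin" and eps: "0 \<le> \<epsilon>"
    and small: "\<not> 1 / sqrt (real (card V)) \<le> \<epsilon>"
  shows "cover_certificate V \<beta> es (1 - \<epsilon>) (sssc_output V \<beta> s1 s2 emin \<epsilon>) \<and>
    image_cost es (sssc_output V \<beta> s1 s2 emin \<epsilon>)
      \<le> 5 * min_inv \<epsilon> (sqrt (real (card V))) * cover_cost es OPT"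
proof -
  interpret unit: cover_instance V "\<lambda>_. 1" es
    using finite_V edge_subset cost_pos distinct_ids by unfold_locales auto
  let ?n = "sqrt (real (card V))"
  define rs where "rs = (GREATEST r. real (card (level_set V s2 r)) \<le> ?n)"
  define I where "I = level_set V s2 rs"
  define \<chi> where "\<chi> = fst s2 |` (V - I) ++ (Some \<circ> emin) |` I"
  have out: "sssc_output V \<beta> s1 s2 emin \<epsilon> = \<chi>"
    unfolding \<chi>_def I_def rs_def using sssc_output_small_eps[OF small] by (simp add: Let_def)
  have inv: "unit.cover_invariant es s2" and assigned: "\<And>v. v \<in> V \<Longrightarrow> snd s2 v \<noteq> None"
    using unit.cover_invariant_final[OF run] unit.assigned_final cov by auto
  have "V \<noteq> {}" and "I \<subseteq> V"
    using small eps unfolding I_def level_set_def by auto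
  then have "dom \<chi> = V"
    using unit.dom_restrict_final[OF inv assigned, of "V - I"] unfolding \<chi>_def by auto
  moreover have "\<exists>e\<in>set es. eid_of e = i \<and> v \<in> verts_of e" if "\<chi> v = Some i" for v i
    using that inv emin \<open>I \<subseteq> V\<close> unfolding \<chi>_def unit.cover_invariant_def emin_ok_def
    by (auto simp: map_add_def restrict_map_def split: if_splits)
  moreover have "(1 - \<epsilon>) * sum \<beta> V \<le> sum \<beta> V"
    using eps sum_nonneg[of V \<beta>] benefit_pos by (simp add: algebra_simps less_imp_le)
  ultimately have certificate: "cover_certificate V \<beta> es (1 - \<epsilon>) \<chi>"
    unfolding cover_certificate_def by simp
  have "id_cost es (ids_above V s2 rs) \<le> 4 * (?n * cover_cost es OPT)"
    unfolding rs_def using inv assigned OPT \<open>V \<noteq> {}\<close> by (intro unit.id_cost_above_card_threshold) auto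
  moreover have "id_cost es (emin ` I) \<le> ?n * cover_cost es OPT"
    using id_cost_emin_image_le[OF emin OPT \<open>I \<subseteq> V\<close>] card_threshold(1)[OF finite_V \<open>V \<noteq> {}\<close> assigned]
      mult_right_mono[OF _ cover_cost_nonneg[OF OPT]] unfolding I_def rs_def by fastforce
  moreover have "ran \<chi> \<subseteq> ids_above V s2 rs \<union> emin ` I"
    unfolding \<chi>_def ids_above_def I_def by (auto simp: ran_def map_add_def restrict_map_def split: if_splits)
  then have "id_cost es (ran \<chi>) \<le> id_cost es (ids_above V s2 rs) + id_cost es (emin ` I)"
    using id_cost_mono id_cost_Un order.trans by blast
  ultimately have "id_cost es (ran \<chi>) \<le> 5 * ?n * cover_cost es OPT"
    by linarith
  then show ?thesis
    using certificate eps small by (simp add: out image_cost_eq_id_cost min_inv_small_eps)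
qed

lemma sssc_guarantee:
  assumes "edge_cover V es OPT" "every_vertex_covered V es" "0 \<le> \<epsilon>" "\<epsilon> < 1"
    "cover_run \<beta> es cover_init s1" "cover_run (\<lambda>_. 1) es cover_init s2" "emin_ok V es emin"
  shows "cover_certificate V \<beta> es (1 - \<epsilon>) (sssc_output V \<beta> s1 s2 emin \<epsilon>) \<and>
    image_cost es (sssc_output V \<beta> s1 s2 emin \<epsilon>)
      \<le> 5 * min_inv \<epsilon> (sqrt (real (card V))) * cover_cost es OPT"
  using assms sssc_large_eps sssc_small_eps by (cases "1 / sqrt (real (card V)) \<le> \<epsilon>") auto

end

theorem theorem12:
  shows "\<exists>C::real. C > 0 \<and>
    (\<forall>(V::nat set) (b::nat \<Rightarrow> real) (es::stream) (OPT::nat set)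
        (s1::cover_state) (s2::cover_state) (emin::nat \<Rightarrow> nat) (\<epsilon>::real).
       weighted_hypergraph V b es \<longrightarrow>
       every_vertex_covered V es \<longrightarrow>
       min_edge_cover V es OPT \<longrightarrow>
       0 \<le> \<epsilon> \<longrightarrow> \<epsilon> < 1 \<longrightarrow>
       cover_run b es cover_init s1 \<longrightarrow>
       cover_run (\<lambda>_. 1) es cover_init s2 \<longrightarrow>
       emin_ok V es emin \<longrightarrow>
       cover_certificate V b es (1 - \<epsilon>) (sssc_output V b s1 s2 emin \<epsilon>) \<and>
       image_cost es (sssc_output V b s1 s2 emin \<epsilon>)
         \<le> C * min_inv \<epsilon> (sqrt (real (card V))) * cover_cost es OPT)"
proof -
  have "cover_certificate V b es (1 - \<epsilon>) (sssc_output V b s1 s2 emin \<epsilon>) \<and>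
      image_cost es (sssc_output V b s1 s2 emin \<epsilon>)
        \<le> 5 * min_inv \<epsilon> (sqrt (real (card V))) * cover_cost es OPT"
    if "weighted_hypergraph V b es" "every_vertex_covered V es" "min_edge_cover V es OPT"
      "0 \<le> \<epsilon>" "\<epsilon> < 1" "cover_run b es cover_init s1" "cover_run (\<lambda>_. 1) es cover_init s2"
      "emin_ok V es emin"
    for V b es OPT s1 s2 emin and \<epsilon> :: real
  proof (rule cover_instance.sssc_guarantee)
    show "cover_instance V b es"
      using that(1) by (auto simp: weighted_hypergraph_cover_instance weighted_hypergraph_def)
    show "edge_cover V es OPT"
      using that(3) by (simp add: min_edge_cover_def)
  qed (use that in auto)
  then show ?thesis
    by (intro exI[of _ 5]) auto
qed

end
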